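(* Let $A$ be a finite-dimensional Hopf algebra over $k$ and $\tau$ a Hopf automorphism of $A$ whose order divides $m$. (i) If $\Lambda_r$ is a right integral of $A$ and $\lambda_r$ a right integral of $A^*$ with $\lambda_r(\Lambda_r)=1$, then $\nu_{m,\tau}(A)=\lambda_r\big(\Lambda_r^{[m,\tau]}\big)$. (ii) If $\Lambda_l$ is a left integral of $A$ and $\lambda_l$ a left integral of $A^*$ with $\lambda_l(\Lambda_l)=1$, then $\nu_{m,\tau}(A)=\lambda_l\big(\tau^{-1}\cdot\Lambda_l^{[m,\tau^{-1}]}\big)$.
   Context: For $a\in A$, $P_{m-1,\tau}(a)=\sum(\tau^{m-1}\cdot a_1)(\tau^{m-2}\cdot a_2)\cdots(\tau\cdot a_{m-1})$ (Sweedler notation), and the $m$th twisted Frobenius–Schur indicator is $\nu_{m,\tau}(A)=\mathrm{Tr}(S\circ P_{m-1,\tau})$, the trace of the linear map $S\circ P_{m-1,\tau}:A\to A$. For a Hopf automorphism $\sigma$ and $h\in A$, $h^{[m,\sigma]}=\sum h_1(\sigma\cdot h_2)\cdots(\sigma^{m-1}\cdot h_m)$. *)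

theory Defs
  imports Main
begin

text \<open>A finite-dimensional Hopf algebra over a field 'k is modelled by structure
constants with respect to a basis (e_i) indexed by a finite type 'i.  Elements of A
are coordinate vectors 'i => 'k; elements of A (x) A are 'i => 'i => 'k;
functionals on A (elements of the dual A^*) are coefficient vectors 'i => 'k.\<close>

record ('i, 'k) hopf =
  hmult :: "'i \<Rightarrow> 'i \<Rightarrow> 'i \<Rightarrow> 'k"      (* e_i e_j = sum_l hmult i j l e_l *)
  hunit :: "'i \<Rightarrow> 'k"
  hcomult :: "'i \<Rightarrow> 'i \<Rightarrow> 'i \<Rightarrow> 'k"    (* Delta e_l = sum_{i,j} hcomult l i j e_i (x) e_j *)
  hcounit :: "'i \<Rightarrow> 'k"
  hantipode :: "'i \<Rightarrow> 'i \<Rightarrow> 'k"        (* S e_i = sum_j hantipode i j e_j *)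

definition bvec :: "'i \<Rightarrow> 'i \<Rightarrow> 'k::field" where
  "bvec i = (\<lambda>j. if j = i then 1 else 0)"

definition mul :: "('i, 'k::field) hopf \<Rightarrow> ('i \<Rightarrow> 'k) \<Rightarrow> ('i \<Rightarrow> 'k) \<Rightarrow> ('i \<Rightarrow> 'k)" where
  "mul H x y = (\<lambda>l. \<Sum>i\<in>UNIV. \<Sum>j\<in>UNIV. x i * y j * hmult H i j l)"

definition one :: "('i, 'k::field) hopf \<Rightarrow> ('i \<Rightarrow> 'k)" where
  "one H = hunit H"

definition cou :: "('i, 'k::field) hopf \<Rightarrow> ('i \<Rightarrow> 'k) \<Rightarrow> 'k" where
  "cou H x = (\<Sum>i\<in>UNIV. x i * hcounit H i)"

definition comul :: "('i, 'k::field) hopf \<Rightarrow> ('i \<Rightarrow> 'k) \<Rightarrow> ('i \<Rightarrow> 'i \<Rightarrow> 'k)" where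
  "comul H x = (\<lambda>i j. \<Sum>l\<in>UNIV. x l * hcomult H l i j)"

definition antip :: "('i, 'k::field) hopf \<Rightarrow> ('i \<Rightarrow> 'k) \<Rightarrow> ('i \<Rightarrow> 'k)" where
  "antip H x = (\<lambda>j. \<Sum>i\<in>UNIV. x i * hantipode H i j)"

definition smul :: "'k::field \<Rightarrow> ('i \<Rightarrow> 'k) \<Rightarrow> ('i \<Rightarrow> 'k)" where
  "smul c x = (\<lambda>j. c * x j)"

definition tmap :: "(('i \<Rightarrow> 'k) \<Rightarrow> ('i \<Rightarrow> 'k)) \<Rightarrow> (('i \<Rightarrow> 'k) \<Rightarrow> ('i \<Rightarrow> 'k))
                    \<Rightarrow> ('i \<Rightarrow> 'i \<Rightarrow> 'k) \<Rightarrow> ('i \<Rightarrow> 'i \<Rightarrow> 'k::field)" where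
  "tmap f g T = (\<lambda>p q. \<Sum>i\<in>UNIV. \<Sum>j\<in>UNIV. T i j * f (bvec i) p * g (bvec j) q)"

definition tmul :: "('i, 'k::field) hopf \<Rightarrow> ('i \<Rightarrow> 'i \<Rightarrow> 'k) \<Rightarrow> ('i \<Rightarrow> 'k)" where
  "tmul H T = (\<lambda>l. \<Sum>i\<in>UNIV. \<Sum>j\<in>UNIV. T i j * hmult H i j l)"

definition tprod :: "('i, 'k::field) hopf \<Rightarrow> ('i \<Rightarrow> 'i \<Rightarrow> 'k) \<Rightarrow> ('i \<Rightarrow> 'i \<Rightarrow> 'k) \<Rightarrow> ('i \<Rightarrow> 'i \<Rightarrow> 'k)" where
  "tprod H T U = (\<lambda>p q. \<Sum>i\<in>UNIV. \<Sum>j\<in>UNIV. \<Sum>i'\<in>UNIV. \<Sum>j'\<in>UNIV.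
       T i j * U i' j' * hmult H i i' p * hmult H j j' q)"

definition hopf_algebra :: "('i::finite, 'k::field) hopf \<Rightarrow> bool" where
  "hopf_algebra H \<longleftrightarrow>
     (\<forall>x y z. mul H (mul H x y) z = mul H x (mul H y z)) \<and>
     (\<forall>x. mul H (one H) x = x \<and> mul H x (one H) = x) \<and>
     (\<forall>l i j k. (\<Sum>p\<in>UNIV. hcomult H l p k * hcomult H p i j)
               = (\<Sum>q\<in>UNIV. hcomult H l i q * hcomult H q j k)) \<and>
     (\<forall>l j. (\<Sum>i\<in>UNIV. hcounit H i * hcomult H l i j) = (if l = j then 1 else 0)) \<and>
     (\<forall>l i. (\<Sum>j\<in>UNIV. hcomult H l i j * hcounit H j) = (if l = i then 1 else 0)) \<and>
     (\<forall>x y. comul H (mul H x y) = tprod H (comul H x) (comul H y)) \<and>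
     comul H (one H) = (\<lambda>i j. one H i * one H j) \<and>
     (\<forall>x y. cou H (mul H x y) = cou H x * cou H y) \<and>
     cou H (one H) = 1 \<and>
     (\<forall>x. tmul H (tmap (antip H) id (comul H x)) = smul (cou H x) (one H)) \<and>
     (\<forall>x. tmul H (tmap id (antip H) (comul H x)) = smul (cou H x) (one H))"

definition hopf_automorphism :: "('i::finite, 'k::field) hopf \<Rightarrow> (('i \<Rightarrow> 'k) \<Rightarrow> ('i \<Rightarrow> 'k)) \<Rightarrow> bool" where
  "hopf_automorphism H t \<longleftrightarrow>
     (\<forall>a x y. t (\<lambda>j. a * x j + y j) = (\<lambda>j. a * t x j + t y j)) \<and>
     bij t \<and>
     (\<forall>x y. t (mul H x y) = mul H (t x) (t y)) \<and>
     t (one H) = one H \<and>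
     (\<forall>x. comul H (t x) = tmap t t (comul H x)) \<and>
     (\<forall>x. cou H (t x) = cou H x)"

text \<open>Sweedler product: sw H [f_1,...,f_n] a = sum f_1(a_1) f_2(a_2) ... f_n(a_n);
  for the empty list it is eps(a) 1.\<close>
fun sw :: "('i, 'k::field) hopf \<Rightarrow> (('i \<Rightarrow> 'k) \<Rightarrow> ('i \<Rightarrow> 'k)) list \<Rightarrow> ('i \<Rightarrow> 'k) \<Rightarrow> ('i \<Rightarrow> 'k)" where
  "sw H [] x = smul (cou H x) (one H)"
| "sw H (f # fs) x = (\<lambda>n. \<Sum>i\<in>UNIV. \<Sum>j\<in>UNIV.
      comul H x i j * mul H (f (bvec i)) (sw H fs (bvec j)) n)"

text \<open>P_{m-1,tau}(a) = sum (tau^{m-1} a_1)(tau^{m-2} a_2) ... (tau a_{m-1})\<close>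
definition Pmap :: "('i, 'k::field) hopf \<Rightarrow> nat \<Rightarrow> (('i \<Rightarrow> 'k) \<Rightarrow> ('i \<Rightarrow> 'k)) \<Rightarrow> ('i \<Rightarrow> 'k) \<Rightarrow> ('i \<Rightarrow> 'k)" where
  "Pmap H m t = sw H (map (\<lambda>k. t ^^ (m - 1 - k)) [0..<m - 1])"

text \<open>twisted Frobenius-Schur indicator nu_{m,tau}(A) = Tr(S o P_{m-1,tau})\<close>
definition fs_ind :: "('i, 'k::field) hopf \<Rightarrow> nat \<Rightarrow> (('i \<Rightarrow> 'k) \<Rightarrow> ('i \<Rightarrow> 'k)) \<Rightarrow> 'k" where
  "fs_ind H m t = (\<Sum>i\<in>UNIV. antip H (Pmap H m t (bvec i)) i)"

text \<open>h^{[m,sigma]} = sum h_1 (sigma h_2) ... (sigma^{m-1} h_m)\<close>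
definition twpow :: "('i, 'k::field) hopf \<Rightarrow> nat \<Rightarrow> (('i \<Rightarrow> 'k) \<Rightarrow> ('i \<Rightarrow> 'k)) \<Rightarrow> ('i \<Rightarrow> 'k) \<Rightarrow> ('i \<Rightarrow> 'k)" where
  "twpow H m s h = sw H (map (\<lambda>k. s ^^ k) [0..<m]) h"

definition left_integral :: "('i, 'k::field) hopf \<Rightarrow> ('i \<Rightarrow> 'k) \<Rightarrow> bool" where
  "left_integral H L \<longleftrightarrow> (\<forall>x. mul H x L = smul (cou H x) L)"

definition right_integral :: "('i, 'k::field) hopf \<Rightarrow> ('i \<Rightarrow> 'k) \<Rightarrow> bool" where
  "right_integral H L \<longleftrightarrow> (\<forall>x. mul H L x = smul (cou H x) L)"

text \<open>Dual Hopf algebra A^*: functional f given by values f(e_i); evaluation, convolution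
  product (f g)(a) = sum f(a_1) g(a_2), counit of A^* is f |-> f(1).\<close>
definition ev :: "('i \<Rightarrow> 'k::field) \<Rightarrow> ('i \<Rightarrow> 'k) \<Rightarrow> 'k" where
  "ev f x = (\<Sum>i\<in>UNIV. f i * x i)"

definition conv :: "('i, 'k::field) hopf \<Rightarrow> ('i \<Rightarrow> 'k) \<Rightarrow> ('i \<Rightarrow> 'k) \<Rightarrow> ('i \<Rightarrow> 'k)" where
  "conv H f g = (\<lambda>l. \<Sum>i\<in>UNIV. \<Sum>j\<in>UNIV. hcomult H l i j * f i * g j)"

definition dual_left_integral :: "('i, 'k::field) hopf \<Rightarrow> ('i \<Rightarrow> 'k) \<Rightarrow> bool" where
  "dual_left_integral H lam \<longleftrightarrow> (\<forall>g. conv H g lam = smul (ev g (one H)) lam)"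

definition dual_right_integral :: "('i, 'k::field) hopf \<Rightarrow> ('i \<Rightarrow> 'k) \<Rightarrow> bool" where
  "dual_right_integral H lam \<longleftrightarrow> (\<forall>g. conv H lam g = smul (ev g (one H)) lam)"

end

theory Submission
  imports Defs
begin

text \<open>If \<open>\<Lambda>\<close> is a right integral of \<open>A\<close> and \<open>\<lambda>\<close> a right integral of \<open>A\<^sup>*\<close> with
  \<open>\<lambda>(\<Lambda>) = 1\<close>, the antipode is \<open>S(b) = \<Sum> \<lambda>(\<Lambda>\<^sub>1 b) \<Lambda>\<^sub>2\<close>.  Hence
  \<open>tr(f \<circ> S) = \<lambda>(\<Sum> \<Lambda>\<^sub>1 f(\<Lambda>\<^sub>2))\<close> for every linear \<open>f\<close>, and the same formula shows
  that \<open>S\<close> reverses products and coproducts.  As \<open>\<tau>\<close> commutes with \<open>S\<close>, this turns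
  \<open>S \<circ> P\<^sub>m\<^sub>-\<^sub>1\<^sub>,\<^sub>\<tau>\<close> into the Sweedler product with the factors \<open>\<tau>, \<dots>, \<tau>\<^sup>m\<^sup>-\<^sup>1\<close>
  in increasing order, composed with \<open>S\<close>, and taking traces gives \<open>\<lambda>(\<Lambda>\<^sup>[\<^sup>m\<^sup>,\<^sup>\<tau>\<^sup>])\<close>;
  this part does not need \<open>\<tau>\<^sup>m = id\<close>.

  For left integrals \<open>S(b) = \<Sum> \<lambda>(b \<Lambda>\<^sub>2) \<Lambda>\<^sub>1\<close> gives
  \<open>tr(S \<circ> f) = \<lambda>(\<Sum> f(\<Lambda>\<^sub>1) \<Lambda>\<^sub>2)\<close> directly.  For \<open>f = P\<^sub>m\<^sub>-\<^sub>1\<^sub>,\<^sub>\<tau>\<close> the factors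
  \<open>\<tau>\<^sup>m\<^sup>-\<^sup>1, \<dots>, \<tau>, id\<close> are \<open>\<tau>\<^sup>-\<^sup>1 \<circ> \<tau>\<^sup>-\<^sup>k\<close> for \<open>k = 0, \<dots>, m - 1\<close> because
  \<open>\<tau>\<^sup>-\<^sup>1 = \<tau>\<^sup>m\<^sup>-\<^sup>1\<close>, so the trace is \<open>\<lambda>(\<tau>\<^sup>-\<^sup>1(\<Lambda>\<^sup>[\<^sup>m\<^sup>,\<^sup>\<tau>\<^sup>-\<^sup>1\<^sup>]))\<close>.\<close>

section \<open>Linear algebra in coordinates\<close>

definition linear_form :: "(('i::finite \<Rightarrow> 'k::field) \<Rightarrow> 'k) \<Rightarrow> bool" where
  "linear_form f \<longleftrightarrow> (\<forall>x. f x = (\<Sum>i\<in>UNIV. x i * f (bvec i)))"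

definition linear_map :: "(('i::finite \<Rightarrow> 'k::field) \<Rightarrow> ('j \<Rightarrow> 'k)) \<Rightarrow> bool" where
  "linear_map g \<longleftrightarrow> (\<forall>n. linear_form (\<lambda>x. g x n))"

definition bilinear_form :: "(('i::finite \<Rightarrow> 'k::field) \<Rightarrow> ('i \<Rightarrow> 'k) \<Rightarrow> 'k) \<Rightarrow> bool" where
  "bilinear_form F \<longleftrightarrow> (\<forall>b. linear_form (\<lambda>a. F a b)) \<and> (\<forall>a. linear_form (F a))"

definition trace :: "(('i::finite \<Rightarrow> 'k::field) \<Rightarrow> ('i \<Rightarrow> 'k)) \<Rightarrow> 'k" where
  "trace f = (\<Sum>i\<in>UNIV. f (bvec i) i)"

lemma sum_mult_bvec [simp]: "(\<Sum>j\<in>UNIV. f j * bvec i j) = (f (i::'i::finite) :: 'k::field)"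
  by (simp add: bvec_def if_distrib cong: if_cong)

lemma sum_bvec_mult [simp]: "(\<Sum>j\<in>UNIV. bvec i j * f j) = (f (i::'i::finite) :: 'k::field)"
  using sum_mult_bvec[of f i] by (simp add: mult.commute)

lemma sum_mult_bvec' [simp]: "(\<Sum>j\<in>UNIV. f j * bvec j i) = (f (i::'i::finite) :: 'k::field)"
  by (simp add: bvec_def if_distrib cong: if_cong)

lemma sum_delta_mult [simp]:
  "(\<Sum>j\<in>UNIV. (if l = j then 1 else 0) * f j) = (f (l::'i::finite) :: 'k::field)"
proof -
  have "(\<Sum>j\<in>UNIV. (if l = j then 1 else 0) * f j) = (\<Sum>j\<in>UNIV. if l = j then f j else 0)"
    by (rule sum.cong) auto
  then show ?thesis by simp
qed

lemma bvec_commute: "bvec (j::'i) n = (bvec n j :: 'k::field)"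
  unfolding bvec_def by auto

lemma ev_bvec [simp]: "ev f (bvec (i::'i::finite)) = (f i :: 'k::field)"
  unfolding ev_def by simp

lemma sum_swap4:
  "(\<Sum>i\<in>A. \<Sum>j\<in>B. \<Sum>k\<in>C. \<Sum>l\<in>D. f i j k l)
     = (\<Sum>k\<in>C. \<Sum>l\<in>D. \<Sum>i\<in>A. \<Sum>j\<in>B. (f i j k l :: 'a::comm_monoid_add))"
proof -
  have "(\<Sum>i\<in>A. \<Sum>j\<in>B. \<Sum>k\<in>C. \<Sum>l\<in>D. f i j k l)
      = (\<Sum>i\<in>A. \<Sum>k\<in>C. \<Sum>l\<in>D. \<Sum>j\<in>B. f i j k l)"
    by (intro sum.cong refl, subst sum.swap, intro sum.cong refl, rule sum.swap)
  also have "\<dots> = (\<Sum>k\<in>C. \<Sum>l\<in>D. \<Sum>i\<in>A. \<Sum>j\<in>B. f i j k l)"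
    by (subst sum.swap, intro sum.cong refl, rule sum.swap)
  finally show ?thesis .
qed

lemma linear_formI:
  assumes "\<And>x. f x = (\<Sum>i\<in>UNIV. x i * c i)"
  shows "linear_form f"
proof -
  have "f (bvec i) = c i" for i by (simp add: assms)
  then show ?thesis unfolding linear_form_def using assms by simp
qed

lemma linear_form_expand: "linear_form f \<Longrightarrow> f x = (\<Sum>i\<in>UNIV. x i * f (bvec i))"
  unfolding linear_form_def by blast

lemma linear_form_sum:
  assumes "linear_form f"
  shows "f (\<lambda>n. \<Sum>k\<in>K. w k n) = (\<Sum>k\<in>K. f (w k))"
proof -
  have "f (\<lambda>n. \<Sum>k\<in>K. w k n) = (\<Sum>i\<in>UNIV. \<Sum>k\<in>K. w k i * f (bvec i))"
    by (subst linear_form_expand[OF assms]) (simp add: sum_distrib_right)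
  also have "\<dots> = (\<Sum>k\<in>K. \<Sum>i\<in>UNIV. w k i * f (bvec i))"
    by (rule sum.swap)
  also have "\<dots> = (\<Sum>k\<in>K. f (w k))"
    by (simp only: linear_form_expand[OF assms, symmetric])
  finally show ?thesis .
qed

lemma linear_form_scale:
  assumes "linear_form f"
  shows "f (\<lambda>n. c * w n) = c * f w"
  by (subst (1 2) linear_form_expand[OF assms]) (simp add: sum_distrib_left mult.assoc)

lemma linear_form_eqI:
  assumes "linear_form f" "linear_form g" "\<And>i. f (bvec i) = g (bvec i)"
  shows "f x = g x"
  using linear_form_expand[OF assms(1), of x] linear_form_expand[OF assms(2), of x] assms(3)
  by simp

lemma linear_form_coord [simp]: "linear_form (\<lambda>x. x n)"
  by (rule linear_formI[where c="bvec n"]) simp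

lemma linear_form_cmult: "linear_form f \<Longrightarrow> linear_form (\<lambda>x. c * f x)"
  by (rule linear_formI[where c="\<lambda>i. c * f (bvec i)"], subst linear_form_expand[of f])
     (simp_all only: sum_distrib_left mult.left_commute)

lemma linear_form_multc: "linear_form f \<Longrightarrow> linear_form (\<lambda>x. f x * c)"
  by (rule linear_formI[where c="\<lambda>i. f (bvec i) * c"], subst linear_form_expand[of f])
     (simp_all only: sum_distrib_right mult.assoc)

lemma linear_form_sum_fun:
  assumes "\<And>k. k \<in> K \<Longrightarrow> linear_form (F k)"
  shows "linear_form (\<lambda>x. \<Sum>k\<in>K. F k x)"
proof (rule linear_formI)
  fix x
  have "(\<Sum>k\<in>K. F k x) = (\<Sum>k\<in>K. \<Sum>i\<in>UNIV. x i * F k (bvec i))"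
    using assms by (intro sum.cong refl) (rule linear_form_expand)
  also have "\<dots> = (\<Sum>i\<in>UNIV. x i * (\<Sum>k\<in>K. F k (bvec i)))"
    by (simp only: sum_distrib_left) (rule sum.swap)
  finally show "(\<Sum>k\<in>K. F k x) = (\<Sum>i\<in>UNIV. x i * (\<Sum>k\<in>K. F k (bvec i)))" .
qed

lemma linear_mapI: "(\<And>n. linear_form (\<lambda>x. g x n)) \<Longrightarrow> linear_map g"
  unfolding linear_map_def by blast

lemma linear_mapD: "linear_map g \<Longrightarrow> linear_form (\<lambda>x. g x n)"
  unfolding linear_map_def by blast

lemma linear_form_comp:
  assumes f: "linear_form f" and g: "linear_map g"
  shows "linear_form (\<lambda>x. f (g x))"
proof (rule linear_formI)
  fix x
  have gx: "g x = (\<lambda>n. \<Sum>i\<in>UNIV. x i * g (bvec i) n)"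
    using g unfolding linear_map_def linear_form_def by (intro ext) blast
  have "f (g x) = (\<Sum>i\<in>UNIV. f (\<lambda>n. x i * g (bvec i) n))"
    unfolding gx by (rule linear_form_sum[OF f])
  also have "\<dots> = (\<Sum>i\<in>UNIV. x i * f (g (bvec i)))"
    by (simp add: linear_form_scale[OF f])
  finally show "f (g x) = (\<Sum>i\<in>UNIV. x i * f (g (bvec i)))" .
qed

lemma linear_map_comp: "linear_map f \<Longrightarrow> linear_map g \<Longrightarrow> linear_map (\<lambda>x. f (g x))"
  unfolding linear_map_def using linear_form_comp[unfolded linear_map_def] by blast

lemma linear_map_id [simp]: "linear_map (\<lambda>x. x)" "linear_map id"
  by (auto simp: linear_map_def)

lemma linear_map_smul: "linear_map g \<Longrightarrow> g (smul c x) = smul c (g x)"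
  unfolding smul_def by (rule ext, rule linear_form_scale[OF linear_mapD])

lemma linear_mapI_axpy:
  fixes t :: "('i::finite \<Rightarrow> 'k::field) \<Rightarrow> ('i \<Rightarrow> 'k)"
  assumes axpy: "\<And>a x y. t (\<lambda>j. a * x j + y j) = (\<lambda>j. a * t x j + t y j)"
  shows "linear_map t"
proof -
  have "t (\<lambda>j. 0) = (\<lambda>j. t (\<lambda>j. 0) j + t (\<lambda>j. 0) j)"
    using axpy[of 1 "\<lambda>j. 0" "\<lambda>j. 0"] by (simp only: mult_1 add_0_right)
  then have zero: "t (\<lambda>j. 0) = (\<lambda>j. 0)"
    by (metis add_cancel_right_right)
  have sum: "t (\<lambda>j. \<Sum>i\<in>F. x i * bvec i j) = (\<lambda>j. \<Sum>i\<in>F. x i * t (bvec i) j)"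
    if "finite F" for F x
    using that
  proof (induction F rule: finite_induct)
    case empty
    then show ?case using zero by simp
  next
    case (insert i F)
    have "t (\<lambda>j. \<Sum>i\<in>insert i F. x i * bvec i j)
        = t (\<lambda>j. x i * bvec i j + (\<Sum>i\<in>F. x i * bvec i j))"
      using insert by simp
    also have "\<dots> = (\<lambda>j. x i * t (bvec i) j + t (\<lambda>j. \<Sum>i\<in>F. x i * bvec i j) j)"
      by (rule axpy)
    also have "\<dots> = (\<lambda>j. \<Sum>i\<in>insert i F. x i * t (bvec i) j)"
      using insert by simp
    finally show ?case .
  qed
  show ?thesis
  proof (rule linear_mapI, rule linear_formI)
    fix n and x :: "'i \<Rightarrow> 'k"
    have "x = (\<lambda>j. \<Sum>i\<in>UNIV. x i * bvec i j)"
      by (rule ext, rule sum_mult_bvec'[symmetric])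
    then have "t x = (\<lambda>j. \<Sum>i\<in>UNIV. x i * t (bvec i) j)"
      using sum[of UNIV x] by (metis finite_UNIV)
    then show "t x n = (\<Sum>i\<in>UNIV. x i * t (bvec i) n)" by simp
  qed
qed

lemma bilinear_formI:
  "(\<And>b. linear_form (\<lambda>a. F a b)) \<Longrightarrow> (\<And>a. linear_form (\<lambda>b. F a b)) \<Longrightarrow> bilinear_form F"
  unfolding bilinear_form_def by auto

lemma bilinear_formD1: "bilinear_form F \<Longrightarrow> linear_form (\<lambda>a. F a b)"
  unfolding bilinear_form_def by auto

lemma bilinear_formD2: "bilinear_form F \<Longrightarrow> linear_form (\<lambda>b. F a b)"
  unfolding bilinear_form_def by auto

lemma bilinear_form_expand:
  assumes "bilinear_form F"
  shows "F u v = (\<Sum>p\<in>UNIV. \<Sum>q\<in>UNIV. u p * v q * F (bvec p) (bvec q))"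
  by (subst linear_form_expand[OF bilinear_formD1[OF assms]],
      subst linear_form_expand[OF bilinear_formD2[OF assms]])
     (simp only: sum_distrib_left mult.assoc)

section \<open>Sweedler sums\<close>

text \<open>\<open>sweedler H x F\<close> is \<open>\<Sum> F(x\<^sub>1, x\<^sub>2)\<close>; only the values of \<open>F\<close> on basis
  vectors matter, so \<open>F\<close> is implicitly extended bilinearly.\<close>
definition sweedler ::
  "('i::finite, 'k::field) hopf \<Rightarrow> ('i \<Rightarrow> 'k) \<Rightarrow> (('i \<Rightarrow> 'k) \<Rightarrow> ('i \<Rightarrow> 'k) \<Rightarrow> 'k) \<Rightarrow> 'k" where
  "sweedler H x F = (\<Sum>i\<in>UNIV. \<Sum>j\<in>UNIV. comul H x i j * F (bvec i) (bvec j))"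

definition tensor_eval ::
  "('i::finite \<Rightarrow> 'i \<Rightarrow> 'k::field) \<Rightarrow> (('i \<Rightarrow> 'k) \<Rightarrow> ('i \<Rightarrow> 'k) \<Rightarrow> 'k) \<Rightarrow> 'k" where
  "tensor_eval T F = (\<Sum>i\<in>UNIV. \<Sum>j\<in>UNIV. T i j * F (bvec i) (bvec j))"

definition algebra_endo ::
  "('i::finite, 'k::field) hopf \<Rightarrow> (('i \<Rightarrow> 'k) \<Rightarrow> ('i \<Rightarrow> 'k)) \<Rightarrow> bool" where
  "algebra_endo H g \<longleftrightarrow>
     linear_map g \<and> (\<forall>x y. g (mul H x y) = mul H (g x) (g y)) \<and> g (one H) = one H"

context
  fixes H :: "('i::finite, 'k::field) hopf"
begin

lemma linear_form_mul_left [simp]: "linear_form (\<lambda>x. mul H x y n)"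
  by (rule linear_formI[where c="\<lambda>i. \<Sum>j\<in>UNIV. y j * hmult H i j n"])
     (simp add: mul_def sum_distrib_left mult.assoc)

lemma linear_form_mul_right [simp]: "linear_form (\<lambda>y. mul H x y n)"
proof (rule linear_formI[where c="\<lambda>j. \<Sum>i\<in>UNIV. x i * hmult H i j n"])
  fix y
  have "mul H x y n = (\<Sum>i\<in>UNIV. \<Sum>j\<in>UNIV. y j * (x i * hmult H i j n))"
    unfolding mul_def by (intro sum.cong refl) (simp only: mult_ac)
  also have "\<dots> = (\<Sum>j\<in>UNIV. y j * (\<Sum>i\<in>UNIV. x i * hmult H i j n))"
    by (subst sum.swap) (simp only: sum_distrib_left)
  finally show "mul H x y n = (\<Sum>j\<in>UNIV. y j * (\<Sum>i\<in>UNIV. x i * hmult H i j n))" .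
qed

lemma linear_map_mul_left [simp]: "linear_map (\<lambda>x. mul H x y)"
  by (rule linear_mapI) simp

lemma linear_map_mul_right [simp]: "linear_map (mul H x)"
  by (rule linear_mapI) simp

lemma mul_scale_left: "mul H (\<lambda>n. c * x n) y l = c * mul H x y l"
  by (rule linear_form_scale[OF linear_form_mul_left])

lemma mul_scale_right: "mul H x (\<lambda>n. c * y n) l = c * mul H x y l"
  by (rule linear_form_scale[OF linear_form_mul_right])

lemma linear_form_cou [simp]: "linear_form (cou H)"
  by (rule linear_formI[where c="hcounit H"]) (simp add: cou_def)

lemma linear_form_ev [simp]: "linear_form (ev f)"
  by (rule linear_formI[where c=f]) (simp add: ev_def mult.commute)

lemma linear_form_comul [simp]: "linear_form (\<lambda>x. comul H x p q)"
  by (rule linear_formI[where c="\<lambda>l. hcomult H l p q"]) (simp add: comul_def)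

lemma linear_form_antip [simp]: "linear_form (\<lambda>x. antip H x n)"
  by (rule linear_formI[where c="\<lambda>l. hantipode H l n"]) (simp add: antip_def)

lemma linear_map_antip [simp]: "linear_map (antip H)"
  by (rule linear_mapI) simp

lemma comul_bvec: "comul H (bvec l) i j = hcomult H l i j"
  by (simp add: comul_def)

lemma cou_bvec: "cou H (bvec i) = hcounit H i"
  by (simp add: cou_def)

lemma mul_bvec: "mul H (bvec i) (bvec j) = hmult H i j"
  by (simp add: fun_eq_iff mul_def mult.assoc flip: sum_distrib_left)

lemma sweedler_bvec:
  "sweedler H (bvec l) F = (\<Sum>i\<in>UNIV. \<Sum>j\<in>UNIV. hcomult H l i j * F (bvec i) (bvec j))"
  unfolding sweedler_def comul_bvec ..

lemma sweedler_expand: "sweedler H x F = (\<Sum>l\<in>UNIV. x l * sweedler H (bvec l) F)"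
proof -
  have "sweedler H x F
      = (\<Sum>i\<in>UNIV. \<Sum>j\<in>UNIV. \<Sum>l\<in>UNIV. x l * (hcomult H l i j * F (bvec i) (bvec j)))"
    unfolding sweedler_def comul_def by (simp only: sum_distrib_right mult.assoc)
  also have "\<dots> = (\<Sum>l\<in>UNIV. \<Sum>i\<in>UNIV. \<Sum>j\<in>UNIV. x l * (hcomult H l i j * F (bvec i) (bvec j)))"
    by (subst sum.swap, rule sum.cong[OF refl], rule sum.swap)
  also have "\<dots> = (\<Sum>l\<in>UNIV. x l * sweedler H (bvec l) F)"
    unfolding sweedler_bvec by (simp only: sum_distrib_left)
  finally show ?thesis .
qed

lemma linear_form_sweedler [simp]: "linear_form (\<lambda>x. sweedler H x F)"
  by (rule linear_formI[where c="\<lambda>l. sweedler H (bvec l) F"]) (rule sweedler_expand)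

lemma sweedler_eqI:
  "(\<And>l. sweedler H (bvec l) F = sweedler H (bvec l) G)
     \<Longrightarrow> sweedler H x F = sweedler H x G"
  by (rule linear_form_eqI[OF linear_form_sweedler linear_form_sweedler])

lemma sweedler_smul: "sweedler H (smul c x) F = c * sweedler H x F"
  unfolding smul_def by (rule linear_form_scale[OF linear_form_sweedler])

lemma linear_form_sweedler_param:
  assumes "\<And>p q. linear_form (\<lambda>a. F a p q)"
  shows "linear_form (\<lambda>a. sweedler H x (\<lambda>p q. F a p q))"
  unfolding sweedler_def by (intro linear_form_sum_fun linear_form_cmult assms)

lemma sweedler_cmult: "c * sweedler H x F = sweedler H x (\<lambda>a b. c * F a b)"
  unfolding sweedler_def by (simp only: sum_distrib_left mult.left_commute)

lemma sweedler_multc: "sweedler H x F * c = sweedler H x (\<lambda>a b. F a b * c)"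
  unfolding sweedler_def by (simp only: sum_distrib_right mult.assoc)

lemma sweedler_sum:
  "(\<Sum>k\<in>K. sweedler H x (F k)) = sweedler H x (\<lambda>a b. \<Sum>k\<in>K. F k a b)"
proof -
  have "(\<Sum>k\<in>K. sweedler H x (F k))
      = (\<Sum>i\<in>UNIV. \<Sum>k\<in>K. \<Sum>j\<in>UNIV. comul H x i j * F k (bvec i) (bvec j))"
    unfolding sweedler_def by (rule sum.swap)
  also have "\<dots> = (\<Sum>i\<in>UNIV. \<Sum>j\<in>UNIV. \<Sum>k\<in>K. comul H x i j * F k (bvec i) (bvec j))"
    by (intro sum.cong refl, rule sum.swap)
  also have "\<dots> = sweedler H x (\<lambda>a b. \<Sum>k\<in>K. F k a b)"
    unfolding sweedler_def by (simp only: sum_distrib_left)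
  finally show ?thesis .
qed

lemma sweedler_swap:
  "sweedler H x (\<lambda>a b. sweedler H y (\<lambda>c d. G a b c d))
     = sweedler H y (\<lambda>c d. sweedler H x (\<lambda>a b. G a b c d))"
proof -
  have "sweedler H x (\<lambda>a b. sweedler H y (\<lambda>c d. G a b c d)) =
        (\<Sum>i\<in>UNIV. \<Sum>j\<in>UNIV. \<Sum>k\<in>UNIV. \<Sum>l\<in>UNIV.
          comul H x i j * comul H y k l * G (bvec i) (bvec j) (bvec k) (bvec l))"
    unfolding sweedler_def by (simp only: sum_distrib_left mult.assoc)
  also have "\<dots> = (\<Sum>k\<in>UNIV. \<Sum>l\<in>UNIV. \<Sum>i\<in>UNIV. \<Sum>j\<in>UNIV.
          comul H x i j * comul H y k l * G (bvec i) (bvec j) (bvec k) (bvec l))"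
    by (rule sum_swap4)
  also have "\<dots> = sweedler H y (\<lambda>c d. sweedler H x (\<lambda>a b. G a b c d))"
    unfolding sweedler_def by (simp only: sum_distrib_left mult.assoc mult.left_commute)
  finally show ?thesis .
qed

lemma linear_form_sweedler_pull:
  assumes f: "linear_form f"
  shows "f (\<lambda>n. sweedler H x (\<lambda>a b. G a b n)) = sweedler H x (\<lambda>a b. f (G a b))"
  unfolding sweedler_def
  by (simp only: linear_form_sum[OF f] linear_form_scale[OF f])

lemma comul_eq_sweedler: "comul H x p q = sweedler H x (\<lambda>a b. a p * b q)"
  unfolding sweedler_def by (simp add: mult.assoc[symmetric])

lemma sweedler_eq_tensor_eval: "sweedler H x F = tensor_eval (comul H x) F"
  unfolding sweedler_def tensor_eval_def ..

lemma tensor_eval_tmap: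
  assumes F: "bilinear_form F"
  shows "tensor_eval (tmap f g T) F = tensor_eval T (\<lambda>a b. F (f a) (g b))"
proof -
  have "tensor_eval (tmap f g T) F
      = (\<Sum>p\<in>UNIV. \<Sum>q\<in>UNIV. \<Sum>i\<in>UNIV. \<Sum>j\<in>UNIV.
          T i j * (f (bvec i) p * g (bvec j) q * F (bvec p) (bvec q)))"
    unfolding tensor_eval_def tmap_def by (simp only: sum_distrib_right mult.assoc)
  also have "\<dots> = (\<Sum>i\<in>UNIV. \<Sum>j\<in>UNIV. \<Sum>p\<in>UNIV. \<Sum>q\<in>UNIV.
          T i j * (f (bvec i) p * g (bvec j) q * F (bvec p) (bvec q)))"
    by (rule sum_swap4)
  also have "\<dots> = tensor_eval T (\<lambda>a b. F (f a) (g b))"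
    unfolding tensor_eval_def
    by (subst (2) bilinear_form_expand[OF F]) (simp only: sum_distrib_left)
  finally show ?thesis .
qed

lemma tensor_eval_tprod:
  assumes F: "bilinear_form F"
  shows "tensor_eval (tprod H T U) F
           = tensor_eval T (\<lambda>a b. tensor_eval U (\<lambda>c d. F (mul H a c) (mul H b d)))"
proof -
  have "tensor_eval (tprod H T U) F
      = (\<Sum>p\<in>UNIV. \<Sum>q\<in>UNIV. \<Sum>i\<in>UNIV. \<Sum>j\<in>UNIV. \<Sum>i'\<in>UNIV. \<Sum>j'\<in>UNIV.
            T i j * (U i' j' * (hmult H i i' p * hmult H j j' q * F (bvec p) (bvec q))))"
    unfolding tensor_eval_def tprod_def by (simp only: sum_distrib_right mult.assoc)
  also have "\<dots>
      = (\<Sum>i\<in>UNIV. \<Sum>j\<in>UNIV. \<Sum>i'\<in>UNIV. \<Sum>j'\<in>UNIV. \<Sum>p\<in>UNIV. \<Sum>q\<in>UNIV.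
            T i j * (U i' j' * (hmult H i i' p * hmult H j j' q * F (bvec p) (bvec q))))"
    by (rule trans[OF sum_swap4], rule sum.cong[OF refl], rule sum.cong[OF refl], rule sum_swap4)
  also have "\<dots>
      = tensor_eval T (\<lambda>a b. tensor_eval U (\<lambda>c d. F (mul H a c) (mul H b d)))"
    unfolding tensor_eval_def mul_bvec
    by (subst (2) bilinear_form_expand[OF F]) (simp only: sum_distrib_left)
  finally show ?thesis .
qed

lemma tmul_tmap: "tmul H (tmap f g T) n = tensor_eval T (\<lambda>a b. mul H (f a) (g b) n)"
proof -
  have "tmul H (tmap f g T) n
      = (\<Sum>p\<in>UNIV. \<Sum>q\<in>UNIV. \<Sum>i\<in>UNIV. \<Sum>j\<in>UNIV.
          T i j * (f (bvec i) p * g (bvec j) q * hmult H p q n))"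
    unfolding tmul_def tmap_def by (simp only: sum_distrib_right mult.assoc)
  also have "\<dots> = (\<Sum>i\<in>UNIV. \<Sum>j\<in>UNIV. \<Sum>p\<in>UNIV. \<Sum>q\<in>UNIV.
          T i j * (f (bvec i) p * g (bvec j) q * hmult H p q n))"
    by (rule sum_swap4)
  also have "\<dots> = tensor_eval T (\<lambda>a b. mul H (f a) (g b) n)"
    unfolding tensor_eval_def mul_def by (simp only: sum_distrib_left)
  finally show ?thesis .
qed

lemma sw_cons: "sw H (f # fs) x = (\<lambda>n. sweedler H x (\<lambda>a b. mul H (f a) (sw H fs b) n))"
  unfolding sweedler_def by simp

declare sw.simps(2)[simp del]

lemma linear_map_sw [simp]: "linear_map (sw H fs)"
proof (cases fs)
  case Nil
  show ?thesis unfolding Nil by (rule linear_mapI) (simp add: smul_def linear_form_multc)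
next
  case (Cons f gs)
  show ?thesis unfolding Cons sw_cons by (rule linear_mapI) simp
qed

lemma algebra_endo_sw:
  assumes g: "algebra_endo H g"
  shows "g (sw H fs x) = sw H (map (\<lambda>f v. g (f v)) fs) x"
proof (induction fs arbitrary: x)
  case Nil
  show ?case using g unfolding algebra_endo_def by (simp add: linear_map_smul)
next
  case (Cons f fs)
  have gl: "linear_map g" and gm: "\<And>x y. g (mul H x y) = mul H (g x) (g y)"
    using g unfolding algebra_endo_def by auto
  show ?case
  proof
    fix n
    have "g (sw H (f # fs) x) n = sweedler H x (\<lambda>a b. g (mul H (f a) (sw H fs b)) n)"
      unfolding sw_cons by (rule linear_form_sweedler_pull[OF linear_mapD[OF gl]])
    also have "\<dots> = sw H (map (\<lambda>f v. g (f v)) (f # fs)) x n"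
      by (simp add: gm Cons.IH sw_cons)
    finally show "g (sw H (f # fs) x) n = sw H (map (\<lambda>f v. g (f v)) (f # fs)) x n" .
  qed
qed

lemma algebra_endo_comp:
  "algebra_endo H f \<Longrightarrow> algebra_endo H g \<Longrightarrow> algebra_endo H (\<lambda>x. f (g x))"
  unfolding algebra_endo_def by (auto intro: linear_map_comp)

lemma algebra_endo_funpow: "algebra_endo H f \<Longrightarrow> algebra_endo H (f ^^ k)"
proof (induction k)
  case 0
  then show ?case by (simp add: algebra_endo_def)
next
  case (Suc k)
  then show ?case using algebra_endo_comp[of f "f ^^ k"] by (simp add: comp_def)
qed

end

section \<open>Finite-dimensional Hopf algebras\<close>

locale fd_hopf =
  fixes H :: "('i::finite, 'k::field) hopf"
  assumes hopf: "hopf_algebra H"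
begin

lemma assoc: "mul H (mul H x y) z = mul H x (mul H y z)"
  using hopf unfolding hopf_algebra_def by blast

lemma unit_left [simp]: "mul H (one H) x = x"
  using hopf unfolding hopf_algebra_def by blast

lemma unit_right [simp]: "mul H x (one H) = x"
  using hopf unfolding hopf_algebra_def by blast

lemma coassoc:
  "(\<Sum>p\<in>UNIV. hcomult H l p k * hcomult H p i j) = (\<Sum>q\<in>UNIV. hcomult H l i q * hcomult H q j k)"
  using hopf unfolding hopf_algebra_def by blast

lemma counit_left: "(\<Sum>i\<in>UNIV. hcounit H i * hcomult H l i j) = (if l = j then 1 else 0)"
  using hopf unfolding hopf_algebra_def by blast

lemma counit_right: "(\<Sum>j\<in>UNIV. hcomult H l i j * hcounit H j) = (if l = i then 1 else 0)"
  using hopf unfolding hopf_algebra_def by blast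

lemma comul_mul: "comul H (mul H x y) = tprod H (comul H x) (comul H y)"
  using hopf unfolding hopf_algebra_def by blast

lemma comul_one: "comul H (one H) = (\<lambda>i j. one H i * one H j)"
  using hopf unfolding hopf_algebra_def by blast

lemma cou_mul: "cou H (mul H x y) = cou H x * cou H y"
  using hopf unfolding hopf_algebra_def by blast

lemma cou_one [simp]: "cou H (one H) = 1"
  using hopf unfolding hopf_algebra_def by blast

lemma sweedler_antipode_left: "sweedler H x (\<lambda>a b. mul H (antip H a) b n) = cou H x * one H n"
proof -
  have "tmul H (tmap (antip H) id (comul H x)) = smul (cou H x) (one H)"
    using hopf unfolding hopf_algebra_def by blast
  from fun_cong[OF this, of n] show ?thesis
    by (simp add: tmul_tmap sweedler_eq_tensor_eval smul_def)
qed

lemma sweedler_antipode_right: "sweedler H x (\<lambda>a b. mul H a (antip H b) n) = cou H x * one H n"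
proof -
  have "tmul H (tmap id (antip H) (comul H x)) = smul (cou H x) (one H)"
    using hopf unfolding hopf_algebra_def by blast
  from fun_cong[OF this, of n] show ?thesis
    by (simp add: tmul_tmap sweedler_eq_tensor_eval smul_def)
qed

lemma sweedler_mul:
  "bilinear_form F \<Longrightarrow> sweedler H (mul H x y) F
     = sweedler H x (\<lambda>a b. sweedler H y (\<lambda>c d. F (mul H a c) (mul H b d)))"
  by (simp add: sweedler_eq_tensor_eval comul_mul tensor_eval_tprod)

lemma sweedler_one: "bilinear_form F \<Longrightarrow> sweedler H (one H) F = F (one H) (one H)"
  by (simp add: sweedler_eq_tensor_eval comul_one tensor_eval_def
      bilinear_form_expand[of F "one H" "one H"] mult.assoc)

lemma mul_scale_one: "mul H q (\<lambda>n. c * one H n) = (\<lambda>n. c * q n)"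
  by (rule ext) (simp add: mul_scale_right)

lemma sweedler_coassoc:
  "sweedler H x (\<lambda>a b. sweedler H a (\<lambda>c d. G c d b))
     = sweedler H x (\<lambda>a b. sweedler H b (\<lambda>c d. G a c d))"
proof (rule sweedler_eqI)
  fix l
  let ?G = "\<lambda>i j k. G (bvec i) (bvec j) (bvec k)"
  let ?c = "hcomult H"
  have "sweedler H (bvec l) (\<lambda>a b. sweedler H a (\<lambda>c d. G c d b)) =
      (\<Sum>p\<in>UNIV. \<Sum>k\<in>UNIV. \<Sum>i\<in>UNIV. \<Sum>j\<in>UNIV. ?c l p k * (?c p i j * ?G i j k))"
    unfolding sweedler_bvec by (simp only: sum_distrib_left)
  also have "\<dots> = (\<Sum>i\<in>UNIV. \<Sum>j\<in>UNIV. \<Sum>p\<in>UNIV. \<Sum>k\<in>UNIV. ?c l p k * (?c p i j * ?G i j k))"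
    by (rule sum_swap4)
  also have "\<dots> = (\<Sum>i\<in>UNIV. \<Sum>j\<in>UNIV. \<Sum>k\<in>UNIV. \<Sum>p\<in>UNIV. ?c l p k * (?c p i j * ?G i j k))"
    by (rule sum.cong[OF refl], rule sum.cong[OF refl], rule sum.swap)
  also have "\<dots> = (\<Sum>i\<in>UNIV. \<Sum>j\<in>UNIV. \<Sum>k\<in>UNIV. (\<Sum>p\<in>UNIV. ?c l p k * ?c p i j) * ?G i j k)"
    by (simp only: sum_distrib_right mult.assoc)
  also have "\<dots> = (\<Sum>i\<in>UNIV. \<Sum>j\<in>UNIV. \<Sum>k\<in>UNIV. (\<Sum>q\<in>UNIV. ?c l i q * ?c q j k) * ?G i j k)"
    by (simp only: coassoc)
  also have "\<dots> = (\<Sum>i\<in>UNIV. \<Sum>j\<in>UNIV. \<Sum>k\<in>UNIV. \<Sum>q\<in>UNIV. ?c l i q * (?c q j k * ?G i j k))"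
    by (simp only: sum_distrib_right mult.assoc)
  also have "\<dots> = (\<Sum>i\<in>UNIV. \<Sum>j\<in>UNIV. \<Sum>q\<in>UNIV. \<Sum>k\<in>UNIV. ?c l i q * (?c q j k * ?G i j k))"
    by (rule sum.cong[OF refl], rule sum.cong[OF refl], rule sum.swap)
  also have "\<dots> = (\<Sum>i\<in>UNIV. \<Sum>q\<in>UNIV. \<Sum>j\<in>UNIV. \<Sum>k\<in>UNIV. ?c l i q * (?c q j k * ?G i j k))"
    by (rule sum.cong[OF refl], rule sum.swap)
  also have "\<dots> = sweedler H (bvec l) (\<lambda>a b. sweedler H b (\<lambda>c d. G a c d))"
    unfolding sweedler_bvec by (simp only: sum_distrib_left)
  finally show "sweedler H (bvec l) (\<lambda>a b. sweedler H a (\<lambda>c d. G c d b))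
      = sweedler H (bvec l) (\<lambda>a b. sweedler H b (\<lambda>c d. G a c d))" .
qed

lemma sweedler_counit_left:
  assumes h: "linear_form h"
  shows "sweedler H x (\<lambda>a b. cou H a * h b) = h x"
proof (rule linear_form_eqI[OF linear_form_sweedler h])
  fix l
  have "sweedler H (bvec l) (\<lambda>a b. cou H a * h b)
      = (\<Sum>i\<in>UNIV. \<Sum>j\<in>UNIV. hcomult H l i j * (hcounit H i * h (bvec j)))"
    unfolding sweedler_bvec cou_bvec ..
  also have "\<dots> = (\<Sum>j\<in>UNIV. \<Sum>i\<in>UNIV. hcounit H i * hcomult H l i j * h (bvec j))"
    by (subst sum.swap) (simp only: mult_ac)
  also have "\<dots> = (\<Sum>j\<in>UNIV. (\<Sum>i\<in>UNIV. hcounit H i * hcomult H l i j) * h (bvec j))"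
    by (simp only: sum_distrib_right)
  also have "\<dots> = h (bvec l)" by (simp add: counit_left)
  finally show "sweedler H (bvec l) (\<lambda>a b. cou H a * h b) = h (bvec l)" .
qed

lemma sweedler_counit_right:
  assumes h: "linear_form h"
  shows "sweedler H x (\<lambda>a b. h a * cou H b) = h x"
proof (rule linear_form_eqI[OF linear_form_sweedler h])
  fix l
  have "sweedler H (bvec l) (\<lambda>a b. h a * cou H b)
      = (\<Sum>i\<in>UNIV. \<Sum>j\<in>UNIV. hcomult H l i j * hcounit H j * h (bvec i))"
    unfolding sweedler_bvec cou_bvec by (simp only: mult_ac)
  also have "\<dots> = (\<Sum>i\<in>UNIV. (\<Sum>j\<in>UNIV. hcomult H l i j * hcounit H j) * h (bvec i))"
    by (simp only: sum_distrib_right)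
  also have "\<dots> = h (bvec l)" by (simp add: counit_right)
  finally show "sweedler H (bvec l) (\<lambda>a b. h a * cou H b) = h (bvec l)" .
qed

lemma sw_snoc:
  assumes f: "linear_map f"
  shows "sw H (fs @ [f]) x = (\<lambda>n. sweedler H x (\<lambda>a b. mul H (sw H fs a) (f b) n))"
proof (induction fs arbitrary: x)
  case Nil
  show ?case
  proof
    fix n
    have "sw H ([] @ [f]) x n = sweedler H x (\<lambda>a b. f a n * cou H b)"
      by (simp add: sw_cons smul_def mul_scale_right mult.commute)
    also have "\<dots> = f x n"
      by (rule sweedler_counit_right[OF linear_mapD[OF f]])
    also have "\<dots> = sweedler H x (\<lambda>a b. cou H a * f b n)"
      by (rule sweedler_counit_left[OF linear_mapD[OF f], symmetric])
    also have "\<dots> = sweedler H x (\<lambda>a b. mul H (sw H [] a) (f b) n)"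
      by (simp add: smul_def mul_scale_left)
    finally show "sw H ([] @ [f]) x n = sweedler H x (\<lambda>a b. mul H (sw H [] a) (f b) n)" .
  qed
next
  case (Cons g fs)
  show ?case
  proof
    fix n
    have "sw H ((g # fs) @ [f]) x n
        = sweedler H x (\<lambda>a b. mul H (g a) (sw H (fs @ [f]) b) n)"
      by (simp add: sw_cons)
    also have "\<dots> = sweedler H x (\<lambda>a b. sweedler H b (\<lambda>c d.
        mul H (g a) (mul H (sw H fs c) (f d)) n))"
      by (simp only: Cons.IH linear_form_sweedler_pull[OF linear_form_mul_right])
    also have "\<dots> = sweedler H x (\<lambda>a b. sweedler H a (\<lambda>c d.
        mul H (g c) (mul H (sw H fs d) (f b)) n))"
      by (rule sweedler_coassoc[symmetric])
    also have "\<dots> = sweedler H x (\<lambda>a b. sweedler H a (\<lambda>c d.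
        mul H (mul H (g c) (sw H fs d)) (f b) n))"
      by (simp only: assoc)
    also have "\<dots> = sweedler H x (\<lambda>a b. mul H (sw H (g # fs) a) (f b) n)"
      by (simp only: sw_cons linear_form_sweedler_pull[OF linear_form_mul_left])
    finally show "sw H ((g # fs) @ [f]) x n
        = sweedler H x (\<lambda>a b. mul H (sw H (g # fs) a) (f b) n)" .
  qed
qed

text \<open>Uniqueness of convolution inverses: \<open>\<Sum> L(b\<^sub>1) b\<^sub>2 S(b\<^sub>3)\<close> is both \<open>L(b)\<close>
  and \<open>S(b)\<close>.\<close>

lemma antip_unique_left:
  assumes L: "linear_map L"
    and inverse: "\<And>b n. sweedler H b (\<lambda>a c. mul H (L a) c n) = cou H b * one H n"
  shows "L b = antip H b"
proof
  fix n
  let ?X = "sweedler H b (\<lambda>a c. sweedler H c (\<lambda>d e. mul H (mul H (L a) d) (antip H e) n))"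
  have "?X = sweedler H b (\<lambda>a c. mul H (L a) (\<lambda>n'. sweedler H c (\<lambda>d e.
      mul H d (antip H e) n')) n)"
    by (simp only: assoc linear_form_sweedler_pull[OF linear_form_mul_right])
  also have "\<dots> = sweedler H b (\<lambda>a c. L a n * cou H c)"
    by (simp add: sweedler_antipode_right mul_scale_right mult.commute)
  also have "\<dots> = L b n"
    by (rule sweedler_counit_right[OF linear_mapD[OF L]])
  finally have "?X = L b n" .
  moreover have "?X = sweedler H b (\<lambda>a c. sweedler H a (\<lambda>d e.
      mul H (mul H (L d) e) (antip H c) n))"
    by (rule sweedler_coassoc[symmetric])
  also have "\<dots> = sweedler H b (\<lambda>a c. mul H (\<lambda>n'. sweedler H a (\<lambda>d e.
      mul H (L d) e n')) (antip H c) n)"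
    by (simp only: linear_form_sweedler_pull[OF linear_form_mul_left])
  also have "\<dots> = sweedler H b (\<lambda>a c. cou H a * antip H c n)"
    by (simp add: inverse mul_scale_left)
  also have "\<dots> = antip H b n"
    by (rule sweedler_counit_left) simp
  ultimately show "L b n = antip H b n" by simp
qed

lemma antip_unique_right:
  assumes R: "linear_map R"
    and inverse: "\<And>b n. sweedler H b (\<lambda>a c. mul H a (R c) n) = cou H b * one H n"
  shows "R b = antip H b"
proof
  fix n
  let ?X = "sweedler H b (\<lambda>a c. sweedler H c (\<lambda>d e. mul H (mul H (antip H a) d) (R e) n))"
  have "?X = sweedler H b (\<lambda>a c. mul H (antip H a) (\<lambda>n'. sweedler H c (\<lambda>d e.
      mul H d (R e) n')) n)"
    by (simp only: assoc linear_form_sweedler_pull[OF linear_form_mul_right])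
  also have "\<dots> = sweedler H b (\<lambda>a c. antip H a n * cou H c)"
    by (simp add: inverse mul_scale_right mult.commute)
  also have "\<dots> = antip H b n"
    by (rule sweedler_counit_right) simp
  finally have "?X = antip H b n" .
  moreover have "?X = sweedler H b (\<lambda>a c. sweedler H a (\<lambda>d e.
      mul H (mul H (antip H d) e) (R c) n))"
    by (rule sweedler_coassoc[symmetric])
  also have "\<dots> = sweedler H b (\<lambda>a c. mul H (\<lambda>n'. sweedler H a (\<lambda>d e.
      mul H (antip H d) e n')) (R c) n)"
    by (simp only: linear_form_sweedler_pull[OF linear_form_mul_left])
  also have "\<dots> = sweedler H b (\<lambda>a c. cou H a * R c n)"
    by (simp add: sweedler_antipode_left mul_scale_left)
  also have "\<dots> = R b n"
    by (rule sweedler_counit_left[OF linear_mapD[OF R]])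
  ultimately show "R b n = antip H b n" by simp
qed

lemma antip_one: "antip H (one H) = one H"
proof
  fix n
  have "bilinear_form (\<lambda>a b. mul H (antip H a) b n)"
    by (rule bilinear_formI)
       (simp_all add: linear_form_comp[OF linear_form_mul_left linear_map_antip])
  with sweedler_antipode_left[of "one H" n] show "antip H (one H) n = one H n"
    by (simp add: sweedler_one)
qed

lemma cou_antip: "cou H (antip H x) = cou H x"
proof -
  let ?X = "cou H (\<lambda>n. sweedler H x (\<lambda>a b. mul H (antip H a) b n))"
  have "?X = cou H (\<lambda>n. cou H x * one H n)"
    by (simp only: sweedler_antipode_left)
  also have "\<dots> = cou H x"
    by (simp add: linear_form_scale[OF linear_form_cou])
  finally have "?X = cou H x" .
  moreover have "?X = sweedler H x (\<lambda>a b. cou H (antip H a) * cou H b)"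
    by (simp add: linear_form_sweedler_pull[OF linear_form_cou] cou_mul)
  also have "\<dots> = cou H (antip H x)"
    by (rule sweedler_counit_right[OF linear_form_comp[OF linear_form_cou linear_map_antip]])
  ultimately show ?thesis by simp
qed

end

locale fd_hopf_automorphism = fd_hopf +
  fixes t :: "('i::finite \<Rightarrow> 'k::field) \<Rightarrow> ('i \<Rightarrow> 'k)"
  assumes aut: "hopf_automorphism H t"
begin

lemma aut_linear_map [simp]: "linear_map t"
  by (rule linear_mapI_axpy) (use aut in \<open>simp add: hopf_automorphism_def\<close>)

lemma aut_linear_form [simp]: "linear_form (\<lambda>x. t x n)"
  by (rule linear_mapD[OF aut_linear_map])

lemma aut_mul: "t (mul H x y) = mul H (t x) (t y)"
  using aut unfolding hopf_automorphism_def by blast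

lemma aut_one: "t (one H) = one H"
  using aut unfolding hopf_automorphism_def by blast

lemma aut_cou: "cou H (t x) = cou H x"
  using aut unfolding hopf_automorphism_def by blast

lemma sweedler_aut:
  "bilinear_form F \<Longrightarrow> sweedler H (t x) F = sweedler H x (\<lambda>a b. F (t a) (t b))"
  using aut by (simp add: hopf_automorphism_def sweedler_eq_tensor_eval tensor_eval_tmap)

lemma algebra_endo_aut_funpow: "algebra_endo H (t ^^ j)"
  by (rule algebra_endo_funpow) (simp add: algebra_endo_def aut_mul aut_one)

text \<open>Expand \<open>\<Sum> t(S(b\<^sub>1)) t(b\<^sub>2) S(t(b\<^sub>3))\<close> in two ways.\<close>

lemma aut_antip: "t (antip H b) = antip H (t b)"
proof
  fix n
  have bilinear: "bilinear_form (\<lambda>d e. mul H u (mul H d (antip H e)) n)" for u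
    by (rule bilinear_formI, rule linear_form_comp[OF linear_form_mul_right linear_map_mul_left],
        rule linear_form_comp[OF linear_form_mul_right
          linear_map_comp[OF linear_map_mul_right linear_map_antip]])
  have unfold_counit: "t (antip H a) n * cou H c
      = sweedler H c (\<lambda>d e. mul H (t (mul H (antip H a) d)) (antip H (t e)) n)" for a c
  proof -
    have "t (antip H a) n * cou H c
        = mul H (t (antip H a)) (\<lambda>n'. sweedler H (t c) (\<lambda>d e. mul H d (antip H e) n')) n"
      by (simp add: sweedler_antipode_right mul_scale_right aut_cou mult.commute)
    also have "\<dots> = sweedler H (t c) (\<lambda>d e. mul H (t (antip H a)) (mul H d (antip H e)) n)"
      by (rule linear_form_sweedler_pull[OF linear_form_mul_right])
    also have "\<dots> = sweedler H c (\<lambda>d e.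
        mul H (t (antip H a)) (mul H (t d) (antip H (t e))) n)"
      by (rule sweedler_aut[OF bilinear])
    also have "\<dots> = sweedler H c (\<lambda>d e. mul H (t (mul H (antip H a) d)) (antip H (t e)) n)"
      by (simp only: aut_mul assoc)
    finally show ?thesis .
  qed
  have "t (antip H b) n = sweedler H b (\<lambda>a c. t (antip H a) n * cou H c)"
    by (rule sweedler_counit_right[OF linear_form_comp[OF aut_linear_form linear_map_antip],
          symmetric])
  also have "\<dots> = sweedler H b (\<lambda>a c. sweedler H c (\<lambda>d e.
      mul H (t (mul H (antip H a) d)) (antip H (t e)) n))"
    by (simp only: unfold_counit)
  also have "\<dots> = sweedler H b (\<lambda>a c. sweedler H a (\<lambda>d e.
      mul H (t (mul H (antip H d) e)) (antip H (t c)) n))"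
    by (rule sweedler_coassoc[symmetric])
  also have "\<dots> = sweedler H b (\<lambda>a c. mul H (t (\<lambda>n'. sweedler H a (\<lambda>d e.
      mul H (antip H d) e n'))) (antip H (t c)) n)"
    by (simp only: linear_form_sweedler_pull[OF linear_form_comp[OF linear_form_mul_left
          aut_linear_map]])
  also have "\<dots> = sweedler H b (\<lambda>a c. cou H a * antip H (t c) n)"
    by (simp add: sweedler_antipode_left linear_map_smul[OF aut_linear_map, unfolded smul_def]
        aut_one mul_scale_left)
  also have "\<dots> = antip H (t b) n"
    by (rule sweedler_counit_left[OF linear_form_comp[OF linear_form_antip aut_linear_map]])
  finally show "t (antip H b) n = antip H (t b) n" .
qed

lemma aut_funpow_antip: "(t ^^ j) (antip H x) = antip H ((t ^^ j) x)"
  by (induction j arbitrary: x) (simp_all add: aut_antip)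

end

section \<open>The antipode in terms of normalized integrals\<close>

locale normalized_right_integrals = fd_hopf +
  fixes Lr lr :: "'i::finite \<Rightarrow> 'k::field"
  assumes Lr_integral: "right_integral H Lr"
    and lr_integral: "dual_right_integral H lr"
    and normalized: "ev lr Lr = 1"
begin

lemma mul_Lr: "mul H Lr x = smul (cou H x) Lr"
  using Lr_integral unfolding right_integral_def by blast

lemma sweedler_lr: "sweedler H x (\<lambda>r s. ev lr r * s n) = ev lr x * one H n"
proof (rule linear_form_eqI[OF linear_form_sweedler linear_form_multc[OF linear_form_ev]])
  fix l
  have "sweedler H (bvec l) (\<lambda>r s. ev lr r * s n)
      = (\<Sum>i\<in>UNIV. \<Sum>j\<in>UNIV. hcomult H l i j * lr i * bvec n j)"
    unfolding sweedler_bvec by (simp add: bvec_commute mult.assoc)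
  also have "\<dots> = conv H lr (bvec n) l"
    unfolding conv_def ..
  also have "\<dots> = ev lr (bvec l) * one H n"
    using lr_integral by (simp add: dual_right_integral_def smul_def ev_def mult.commute)
  finally show "sweedler H (bvec l) (\<lambda>r s. ev lr r * s n) = ev lr (bvec l) * one H n" .
qed

lemma antip_eq_right_integral:
  "antip H b = (\<lambda>n. sweedler H Lr (\<lambda>p q. ev lr (mul H p b) * q n))"
proof (rule antip_unique_left[symmetric])
  show "linear_map (\<lambda>b n. sweedler H Lr (\<lambda>p q. ev lr (mul H p b) * q n))"
    by (intro linear_mapI linear_form_sweedler_param linear_form_multc
        linear_form_comp[OF linear_form_ev linear_map_mul_right])
  fix b n
  have bilinear: "bilinear_form (\<lambda>r s. ev lr r * s n)"
    by (rule bilinear_formI) (simp_all add: linear_form_multc linear_form_cmult)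
  have "sweedler H b (\<lambda>a c. mul H (\<lambda>n. sweedler H Lr (\<lambda>p q. ev lr (mul H p a) * q n)) c n)
      = sweedler H b (\<lambda>a c. sweedler H Lr (\<lambda>p q. ev lr (mul H p a) * mul H q c n))"
    by (simp only: linear_form_sweedler_pull[OF linear_form_mul_left] mul_scale_left)
  also have "\<dots> = sweedler H Lr (\<lambda>p q. sweedler H b (\<lambda>a c. ev lr (mul H p a) * mul H q c n))"
    by (rule sweedler_swap)
  also have "\<dots> = sweedler H (mul H Lr b) (\<lambda>r s. ev lr r * s n)"
    by (rule sweedler_mul[OF bilinear, symmetric])
  also have "\<dots> = cou H b * one H n"
    by (simp add: mul_Lr sweedler_smul sweedler_lr normalized)
  finally show "sweedler H b (\<lambda>a c. mul H (\<lambda>n. sweedler H Lr (\<lambda>p q.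
      ev lr (mul H p a) * q n)) c n) = cou H b * one H n" .
qed

text \<open>\<open>\<Lambda> a\<^sub>1 = \<epsilon>(a\<^sub>1) \<Lambda>\<close> lets \<open>a\<close> move from the first Sweedler factor of \<open>\<Lambda>\<close> to
  the second, where it turns into \<open>S(a)\<close>.\<close>

lemma sweedler_Lr_transfer:
  assumes G: "bilinear_form G"
  shows "sweedler H Lr (\<lambda>p q. G (mul H p a) q) = sweedler H Lr (\<lambda>p q. G p (mul H q (antip H a)))"
proof -
  have G1: "linear_form (\<lambda>v. G (mul H p v) q)" for p q
    by (rule linear_form_comp[OF bilinear_formD1[OF G] linear_map_mul_right])
  have G2: "linear_form (\<lambda>v. G p (mul H q v))" for p q
    by (rule linear_form_comp[OF bilinear_formD2[OF G] linear_map_mul_right])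
  have linear: "linear_form (\<lambda>v. sweedler H Lr (\<lambda>p q. G p (mul H q (antip H v))))"
    by (intro linear_form_sweedler_param linear_form_comp[OF G2 linear_map_antip])
  have bilinear: "bilinear_form (\<lambda>p q. G p (mul H q (antip H v)))" for v
    by (rule bilinear_formI, rule bilinear_formD1[OF G],
        rule linear_form_comp[OF bilinear_formD2[OF G] linear_map_mul_left])
  have "sweedler H Lr (\<lambda>p q. G p (mul H q (antip H a)))
      = sweedler H a (\<lambda>a1 a2. cou H a1 * sweedler H Lr (\<lambda>p q. G p (mul H q (antip H a2))))"
    by (rule sweedler_counit_left[OF linear, symmetric])
  also have "\<dots> = sweedler H a (\<lambda>a1 a2.
      sweedler H (mul H Lr a1) (\<lambda>p q. G p (mul H q (antip H a2))))"
    by (simp only: mul_Lr sweedler_smul)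
  also have "\<dots> = sweedler H Lr (\<lambda>p q. sweedler H a (\<lambda>a1 a2. sweedler H a1 (\<lambda>r s.
      G (mul H p r) (mul H (mul H q s) (antip H a2)))))"
    by (simp only: sweedler_mul[OF bilinear] sweedler_swap[where x=a])
  also have "\<dots> = sweedler H Lr (\<lambda>p q. sweedler H a (\<lambda>a1 a2. sweedler H a2 (\<lambda>s u.
      G (mul H p a1) (mul H (mul H q s) (antip H u)))))"
    by (simp only: sweedler_coassoc)
  also have "\<dots> = sweedler H Lr (\<lambda>p q. sweedler H a (\<lambda>a1 a2.
      G (mul H p a1) (mul H q (\<lambda>n. sweedler H a2 (\<lambda>s u. mul H s (antip H u) n)))))"
    by (simp only: assoc linear_form_sweedler_pull[OF G2])
  also have "\<dots> = sweedler H Lr (\<lambda>p q. sweedler H a (\<lambda>a1 a2. G (mul H p a1) q * cou H a2))"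
    by (simp only: sweedler_antipode_right mul_scale_one linear_form_scale[OF bilinear_formD2[OF G]])
       (simp only: mult.commute)
  also have "\<dots> = sweedler H Lr (\<lambda>p q. G (mul H p a) q)"
    by (simp only: sweedler_counit_right[OF G1])
  finally show ?thesis by (rule sym)
qed

lemma antip_mul: "antip H (mul H x y) = mul H (antip H y) (antip H x)"
proof
  fix n
  have bilinear: "bilinear_form (\<lambda>r s. ev lr (mul H r y) * s n)"
    by (rule bilinear_formI,
        rule linear_form_multc[OF linear_form_comp[OF linear_form_ev linear_map_mul_left]],
        rule linear_form_cmult[OF linear_form_coord])
  have "antip H (mul H x y) n = sweedler H Lr (\<lambda>p q. ev lr (mul H (mul H p x) y) * q n)"
    by (simp only: antip_eq_right_integral assoc)
  also have "\<dots> = sweedler H Lr (\<lambda>p q. ev lr (mul H p y) * mul H q (antip H x) n)"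
    by (rule sweedler_Lr_transfer[OF bilinear])
  also have "\<dots> = mul H (antip H y) (antip H x) n"
    by (simp only: antip_eq_right_integral linear_form_sweedler_pull[OF linear_form_mul_left]
        mul_scale_left)
  finally show "antip H (mul H x y) n = mul H (antip H y) (antip H x) n" .
qed

lemma sweedler_lr_transfer:
  "sweedler H x (\<lambda>a b. ev lr (mul H a y) * b n)
     = sweedler H y (\<lambda>a b. ev lr (mul H x a) * antip H b n)"
proof -
  have bilinear: "bilinear_form (\<lambda>r s. ev lr r * mul H s (antip H b) n)" for b
    by (rule bilinear_formI, rule linear_form_multc[OF linear_form_ev],
        rule linear_form_cmult[OF linear_form_mul_left])
  have "sweedler H y (\<lambda>a b. ev lr (mul H x a) * antip H b n)
      = sweedler H y (\<lambda>a b. mul H (\<lambda>n'. sweedler H (mul H x a) (\<lambda>r s. ev lr r * s n'))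
          (antip H b) n)"
    by (simp only: sweedler_lr mul_scale_left unit_left)
  also have "\<dots> = sweedler H y (\<lambda>a b. sweedler H x (\<lambda>r s. sweedler H a (\<lambda>r' s'.
      ev lr (mul H r r') * mul H (mul H s s') (antip H b) n)))"
    by (simp only: linear_form_sweedler_pull[OF linear_form_mul_left] mul_scale_left
        sweedler_mul[OF bilinear])
  also have "\<dots> = sweedler H x (\<lambda>r s. sweedler H y (\<lambda>a b. sweedler H b (\<lambda>s' b'.
      ev lr (mul H r a) * mul H (mul H s s') (antip H b') n)))"
    by (simp only: sweedler_swap[where x=y] sweedler_coassoc)
  also have "\<dots> = sweedler H x (\<lambda>r s. sweedler H y (\<lambda>a b. ev lr (mul H r a) *
      mul H s (\<lambda>n'. sweedler H b (\<lambda>s' b'. mul H s' (antip H b') n')) n))"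
    by (simp only: assoc linear_form_sweedler_pull[OF linear_form_cmult[OF linear_form_mul_right]])
  also have "\<dots> = sweedler H x (\<lambda>r s. sweedler H y (\<lambda>a b. ev lr (mul H r a) * s n * cou H b))"
    by (simp only: sweedler_antipode_right mul_scale_one mult_ac)
  also have "\<dots> = sweedler H x (\<lambda>r s. ev lr (mul H r y) * s n)"
    by (simp only: sweedler_counit_right[OF linear_form_multc[OF
          linear_form_comp[OF linear_form_ev linear_map_mul_right]]])
  finally show ?thesis by (rule sym)
qed

lemma comul_antip: "comul H (antip H b) p q = sweedler H b (\<lambda>a c. antip H c p * antip H a q)"
proof -
  have "comul H (antip H b) p q = sweedler H Lr (\<lambda>r s. ev lr (mul H r b) * comul H s p q)"
    by (simp only: antip_eq_right_integral linear_form_sweedler_pull[OF linear_form_comul]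
        linear_form_scale[OF linear_form_comul])
  also have "\<dots> = sweedler H Lr (\<lambda>r s. sweedler H r (\<lambda>r1 r2. ev lr (mul H r1 b) * r2 p) * s q)"
    by (simp only: comul_eq_sweedler sweedler_cmult sweedler_coassoc[symmetric] sweedler_multc
        mult.assoc)
  also have "\<dots> = sweedler H Lr (\<lambda>r s. sweedler H b (\<lambda>a c. ev lr (mul H r a) * antip H c p) * s q)"
    by (simp only: sweedler_lr_transfer)
  also have "\<dots> = sweedler H Lr (\<lambda>r s. sweedler H b (\<lambda>a c. antip H c p * (ev lr (mul H r a) * s q)))"
    by (simp only: sweedler_multc) (simp only: mult_ac)
  also have "\<dots> = sweedler H b (\<lambda>a c. antip H c p * antip H a q)"
    by (simp only: sweedler_swap[where x=Lr] sweedler_cmult antip_eq_right_integral)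
  finally show ?thesis .
qed

lemma sweedler_antip:
  assumes F: "bilinear_form F"
  shows "sweedler H (antip H x) F = sweedler H x (\<lambda>a b. F (antip H b) (antip H a))"
proof -
  have "sweedler H (antip H x) F = (\<Sum>p\<in>UNIV. \<Sum>q\<in>UNIV.
      sweedler H x (\<lambda>a c. antip H c p * antip H a q) * F (bvec p) (bvec q))"
    unfolding sweedler_def[of H "antip H x"] comul_antip ..
  also have "\<dots> = sweedler H x (\<lambda>a c. \<Sum>p\<in>UNIV. \<Sum>q\<in>UNIV.
      antip H c p * antip H a q * F (bvec p) (bvec q))"
    by (simp only: sweedler_multc sweedler_sum)
  also have "\<dots> = sweedler H x (\<lambda>a b. F (antip H b) (antip H a))"
    by (simp only: bilinear_form_expand[OF F, symmetric])
  finally show ?thesis .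
qed

lemma antip_sw:
  assumes "\<And>f. f \<in> set fs \<Longrightarrow> linear_map f \<and> (\<forall>x. f (antip H x) = antip H (f x))"
  shows "antip H (sw H fs x) = sw H (rev fs) (antip H x)"
  using assms
proof (induction fs arbitrary: x)
  case Nil
  show ?case by (simp add: linear_map_smul[OF linear_map_antip] antip_one cou_antip)
next
  case (Cons f fs)
  have f: "linear_map f" and f_antip: "\<And>x. f (antip H x) = antip H (f x)"
    using Cons.prems by auto
  have IH: "\<And>x. antip H (sw H fs x) = sw H (rev fs) (antip H x)"
    using Cons by auto
  have bilinear: "bilinear_form (\<lambda>a b. mul H (sw H (rev fs) a) (f b) n)" for n
    by (rule bilinear_formI, rule linear_form_comp[OF linear_form_mul_left linear_map_sw],
        rule linear_form_comp[OF linear_form_mul_right f])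
  show ?case
  proof
    fix n
    have "antip H (sw H (f # fs) x) n
        = sweedler H x (\<lambda>a b. antip H (mul H (f a) (sw H fs b)) n)"
      unfolding sw_cons by (rule linear_form_sweedler_pull[OF linear_form_antip])
    also have "\<dots> = sweedler H x (\<lambda>a b. mul H (sw H (rev fs) (antip H b)) (f (antip H a)) n)"
      by (simp only: antip_mul IH f_antip)
    also have "\<dots> = sweedler H (antip H x) (\<lambda>a b. mul H (sw H (rev fs) a) (f b) n)"
      by (rule sweedler_antip[OF bilinear, symmetric])
    also have "\<dots> = sw H (rev (f # fs)) (antip H x) n"
      by (simp add: sw_snoc[OF f])
    finally show "antip H (sw H (f # fs) x) n = sw H (rev (f # fs)) (antip H x) n" .
  qed
qed

lemma trace_comp_antip:
  assumes f: "linear_map f"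
  shows "trace (\<lambda>x. f (antip H x)) = ev lr (\<lambda>n. sweedler H Lr (\<lambda>p q. mul H p (f q) n))"
proof -
  have expand: "(\<Sum>i\<in>UNIV. ev lr (mul H p (bvec i)) * v i) = ev lr (mul H p v)" for p v
    by (subst linear_form_expand[OF linear_form_comp[OF linear_form_ev linear_map_mul_right],
          where x=v])
       (simp only: mult.commute)
  have "trace (\<lambda>x. f (antip H x))
      = (\<Sum>i\<in>UNIV. sweedler H Lr (\<lambda>p q. ev lr (mul H p (bvec i)) * f q i))"
    unfolding trace_def antip_eq_right_integral
    by (simp only: linear_form_sweedler_pull[OF linear_mapD[OF f]]
        linear_form_scale[OF linear_mapD[OF f]])
  also have "\<dots> = sweedler H Lr (\<lambda>p q. ev lr (mul H p (f q)))"
    by (simp only: sweedler_sum expand)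
  also have "\<dots> = ev lr (\<lambda>n. sweedler H Lr (\<lambda>p q. mul H p (f q) n))"
    by (rule linear_form_sweedler_pull[OF linear_form_ev, symmetric])
  finally show ?thesis .
qed

lemma trace_antip_sw:
  assumes "\<And>f. f \<in> set fs \<Longrightarrow> linear_map f \<and> (\<forall>x. f (antip H x) = antip H (f x))"
  shows "trace (\<lambda>x. antip H (sw H fs x)) = ev lr (sw H (id # rev fs) Lr)"
  by (simp only: antip_sw[OF assms] trace_comp_antip[OF linear_map_sw] sw_cons id_apply)

end

locale normalized_left_integrals = fd_hopf +
  fixes Ll ll :: "'i::finite \<Rightarrow> 'k::field"
  assumes Ll_integral: "left_integral H Ll"
    and ll_integral: "dual_left_integral H ll"
    and normalized: "ev ll Ll = 1"
begin

lemma mul_Ll: "mul H x Ll = smul (cou H x) Ll"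
  using Ll_integral unfolding left_integral_def by blast

lemma sweedler_ll: "sweedler H x (\<lambda>r s. ev ll s * r n) = ev ll x * one H n"
proof (rule linear_form_eqI[OF linear_form_sweedler linear_form_multc[OF linear_form_ev]])
  fix l
  have "sweedler H (bvec l) (\<lambda>r s. ev ll s * r n)
      = (\<Sum>i\<in>UNIV. \<Sum>j\<in>UNIV. hcomult H l i j * bvec n i * ll j)"
    unfolding sweedler_bvec by (intro sum.cong refl) (simp add: bvec_commute mult_ac)
  also have "\<dots> = conv H (bvec n) ll l"
    unfolding conv_def ..
  also have "\<dots> = ev ll (bvec l) * one H n"
    using ll_integral by (simp add: dual_left_integral_def smul_def ev_def mult.commute)
  finally show "sweedler H (bvec l) (\<lambda>r s. ev ll s * r n) = ev ll (bvec l) * one H n" .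
qed

lemma antip_eq_left_integral:
  "antip H b = (\<lambda>n. sweedler H Ll (\<lambda>p q. ev ll (mul H b q) * p n))"
proof (rule antip_unique_right[symmetric])
  show "linear_map (\<lambda>b n. sweedler H Ll (\<lambda>p q. ev ll (mul H b q) * p n))"
    by (intro linear_mapI linear_form_sweedler_param linear_form_multc
        linear_form_comp[OF linear_form_ev linear_map_mul_left])
  fix b n
  have bilinear: "bilinear_form (\<lambda>r s. ev ll s * r n)"
    by (rule bilinear_formI) (simp_all add: linear_form_multc linear_form_cmult)
  have "sweedler H b (\<lambda>a c. mul H a (\<lambda>n. sweedler H Ll (\<lambda>p q. ev ll (mul H c q) * p n)) n)
      = sweedler H b (\<lambda>a c. sweedler H Ll (\<lambda>p q. ev ll (mul H c q) * mul H a p n))"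
    by (simp only: linear_form_sweedler_pull[OF linear_form_mul_right] mul_scale_right)
  also have "\<dots> = sweedler H (mul H b Ll) (\<lambda>r s. ev ll s * r n)"
    by (rule sweedler_mul[OF bilinear, symmetric])
  also have "\<dots> = cou H b * one H n"
    by (simp add: mul_Ll sweedler_smul sweedler_ll normalized)
  finally show "sweedler H b (\<lambda>a c. mul H a (\<lambda>n. sweedler H Ll (\<lambda>p q.
      ev ll (mul H c q) * p n)) n) = cou H b * one H n" .
qed

lemma trace_antip_comp:
  assumes f: "linear_map f"
  shows "trace (\<lambda>x. antip H (f x)) = ev ll (\<lambda>n. sweedler H Ll (\<lambda>p q. mul H (f p) q n))"
proof -
  have expand: "(\<Sum>i\<in>UNIV. ev ll (mul H (f (bvec i)) q) * v i) = ev ll (mul H (f v) q)" for q v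
    by (subst linear_form_expand[OF linear_form_comp[OF linear_form_ev
          linear_map_comp[OF linear_map_mul_left f]], where x=v])
       (simp only: mult.commute)
  have "trace (\<lambda>x. antip H (f x))
      = (\<Sum>i\<in>UNIV. sweedler H Ll (\<lambda>p q. ev ll (mul H (f (bvec i)) q) * p i))"
    unfolding trace_def antip_eq_left_integral ..
  also have "\<dots> = sweedler H Ll (\<lambda>p q. ev ll (mul H (f p) q))"
    by (simp only: sweedler_sum expand)
  also have "\<dots> = ev ll (\<lambda>n. sweedler H Ll (\<lambda>p q. mul H (f p) q n))"
    by (rule linear_form_sweedler_pull[OF linear_form_ev, symmetric])
  finally show ?thesis .
qed

lemma trace_antip_sw: "trace (\<lambda>x. antip H (sw H fs x)) = ev ll (sw H (fs @ [id]) Ll)"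
  by (simp only: trace_antip_comp[OF linear_map_sw] sw_snoc[OF linear_map_id(2)] id_apply)

end

section \<open>Twisted Frobenius-Schur indicators\<close>

lemma fs_ind_eq_trace: "fs_ind H m t = trace (\<lambda>x. antip H (Pmap H m t x))"
  unfolding fs_ind_def trace_def ..

lemma map_funpow_upt:
  assumes "m \<ge> 1"
  shows "map (\<lambda>k. f ^^ k) [0..<m] = id # rev (map (\<lambda>k. f ^^ (m - 1 - k)) [0..<m - 1])"
    (is "?lhs = ?rhs")
proof (rule nth_equalityI)
  show "length ?lhs = length ?rhs"
    using assms by simp
  fix i
  assume "i < length ?lhs"
  then have i: "i < m" by simp
  show "?lhs ! i = ?rhs ! i"
  proof (cases i)
    case 0
    then show ?thesis using i by simp
  next
    case (Suc j)
    then have "m - 1 - (m - 1 - Suc j) = Suc j" using i by simp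
    then show ?thesis using Suc i by (simp add: rev_nth del: funpow.simps)
  qed
qed

lemma inv_funpow_periodic:
  assumes "f ^^ Suc n = id"
  shows "inv f = f ^^ n"
proof (rule inv_unique_comp)
  show "f \<circ> f ^^ n = id" using assms by simp
  show "f ^^ n \<circ> f = id" using assms by (simp only: funpow_Suc_right)
qed

lemma funpow_periodic_comp:
  assumes "f ^^ Suc n = id" and "k \<le> n"
  shows "f ^^ n \<circ> (f ^^ n) ^^ k = f ^^ (n - k)"
proof -
  have "n + n * k = (n - k) + Suc n * k" using assms(2) by (simp add: algebra_simps)
  then have "f ^^ n \<circ> (f ^^ n) ^^ k = f ^^ (n - k) \<circ> (f ^^ Suc n) ^^ k"
    by (simp only: funpow_mult funpow_add[symmetric])
  then show ?thesis using assms(1) by simp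
qed

context fd_hopf_automorphism
begin

lemma fs_ind_eq_right_integral:
  assumes "normalized_right_integrals H Lr lr" and "m \<ge> 1"
  shows "fs_ind H m t = ev lr (twpow H m t Lr)"
proof -
  interpret normalized_right_integrals H Lr lr by (fact assms(1))
  define fs where "fs = map (\<lambda>k. t ^^ (m - 1 - k)) [0..<m - 1]"
  have "\<And>f. f \<in> set fs \<Longrightarrow> linear_map f \<and> (\<forall>x. f (antip H x) = antip H (f x))"
    using algebra_endo_aut_funpow aut_funpow_antip by (auto simp: fs_def algebra_endo_def)
  then have "fs_ind H m t = ev lr (sw H (id # rev fs) Lr)"
    unfolding fs_ind_eq_trace Pmap_def fs_def[symmetric] by (rule trace_antip_sw)
  also have "id # rev fs = map (\<lambda>k. t ^^ k) [0..<m]"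
    unfolding fs_def by (rule map_funpow_upt[OF assms(2), symmetric])
  finally show ?thesis unfolding twpow_def .
qed

lemma fs_ind_eq_left_integral:
  assumes "normalized_left_integrals H Ll ll" and "m \<ge> 1" and "t ^^ m = id"
  shows "fs_ind H m t = ev ll (inv t (twpow H m (inv t) Ll))"
proof -
  interpret normalized_left_integrals H Ll ll by (fact assms(1))
  obtain n where m: "m = Suc n" using assms(2) by (cases m) auto
  have periodic: "t ^^ Suc n = id" using assms(3) m by simp
  define fs where "fs = map (\<lambda>k. t ^^ (m - 1 - k)) [0..<m - 1]"
  have "map (\<lambda>k v. (t ^^ n) (((t ^^ n) ^^ k) v)) [0..<m] = map (\<lambda>k. t ^^ (n - k)) [0..<m]"
    using funpow_periodic_comp[OF periodic] by (auto simp: m comp_def intro!: map_cong)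
  also have "\<dots> = fs @ [id]"
    by (simp add: m fs_def)
  finally have powers: "map (\<lambda>k v. (t ^^ n) (((t ^^ n) ^^ k) v)) [0..<m] = fs @ [id]" .
  have "fs_ind H m t = ev ll (sw H (fs @ [id]) Ll)"
    unfolding fs_ind_eq_trace Pmap_def fs_def[symmetric] by (rule trace_antip_sw)
  also have "sw H (fs @ [id]) Ll = (t ^^ n) (sw H (map (\<lambda>k. (t ^^ n) ^^ k) [0..<m]) Ll)"
    by (simp add: algebra_endo_sw[OF algebra_endo_aut_funpow] comp_def powers)
  also have "\<dots> = inv t (twpow H m (inv t) Ll)"
    unfolding twpow_def inv_funpow_periodic[OF periodic] ..
  finally show ?thesis .
qed

end

theorem corollary5p2:
  fixes H :: "('i::finite, 'k::field) hopf"
    and tau :: "('i \<Rightarrow> 'k) \<Rightarrow> ('i \<Rightarrow> 'k)"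
    and m :: nat
  assumes "hopf_algebra H"
    and "hopf_automorphism H tau"
    and "m \<ge> 1"
    and "tau ^^ m = id"
  shows "(\<forall>Lr lr. right_integral H Lr \<longrightarrow> dual_right_integral H lr \<longrightarrow> ev lr Lr = 1 \<longrightarrow>
            fs_ind H m tau = ev lr (twpow H m tau Lr))
       \<and> (\<forall>Ll ll. left_integral H Ll \<longrightarrow> dual_left_integral H ll \<longrightarrow> ev ll Ll = 1 \<longrightarrow>
            fs_ind H m tau = ev ll (inv tau (twpow H m (inv tau) Ll)))"
proof -
  interpret fd_hopf_automorphism H tau
    using assms(1,2) by unfold_locales
  have right: "normalized_right_integrals H Lr lr"
    if "right_integral H Lr" "dual_right_integral H lr" "ev lr Lr = 1" for Lr lr
    using assms(1) that by unfold_locales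
  have left: "normalized_left_integrals H Ll ll"
    if "left_integral H Ll" "dual_left_integral H ll" "ev ll Ll = 1" for Ll ll
    using assms(1) that by unfold_locales
  show ?thesis
    using fs_ind_eq_right_integral[OF right assms(3)] fs_ind_eq_left_integral[OF left assms(3,4)]
    by blast
qed

end
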